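(* Let $G$ be a finite abstract simplicial complex. Then $$\sum_{x \in G} w(x)\, w(S(x)) = 0.$$
   Context: A finite abstract simplicial complex $G$ is a finite set of non-empty finite sets such that every non-empty subset of an element of $G$ is again in $G$. For $x\in G$, $w(x)=(-1)^{|x|-1}$, and for $A\subset G$, $w(A)=\sum_{y\in A}w(y)$. $G$ carries the finite topology whose basis consists of the stars $U(x)=\{y\in G : x\subset y\}$. The unit ball $B(x)$ is the closure of $U(x)$, i.e. $B(x)=\{y\in G : y\subset z \text{ for some } z\in G \text{ with } x\subset z\}$, and the unit sphere is $S(x)=B(x)\setminus U(x)$. *)

theory Defs
  imports Main
begin

definition simplicial_complex :: "'a set set \<Rightarrow> bool" where
  "simplicial_complex G \<longleftrightarrow> finite G \<and>
     (\<forall>x\<in>G. x \<noteq> {} \<and> finite x) \<and>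
     (\<forall>x\<in>G. \<forall>y. y \<subseteq> x \<and> y \<noteq> {} \<longrightarrow> y \<in> G)"

definition w :: "'a set \<Rightarrow> int" where
  "w x = (-1) ^ (card x - 1)"

definition wset :: "'a set set \<Rightarrow> int" where
  "wset A = (\<Sum>y\<in>A. w y)"

definition star :: "'a set set \<Rightarrow> 'a set \<Rightarrow> 'a set set" where
  "star G x = {y\<in>G. x \<subseteq> y}"

definition ball :: "'a set set \<Rightarrow> 'a set \<Rightarrow> 'a set set" where
  "ball G x = {y\<in>G. \<exists>z\<in>G. x \<subseteq> z \<and> y \<subseteq> z}"

definition sphere :: "'a set set \<Rightarrow> 'a set \<Rightarrow> 'a set set" where
  "sphere G x = ball G x - star G x"

end

theory Submission
  imports Defs
begin

text \<open>The closed ball \<open>B(x)\<close> and the closure of a simplex are both cones: all their facets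
contain a common vertex \<open>v\<close>. Pairing each face \<open>y\<close> not containing \<open>v\<close> with \<open>insert v y\<close>
cancels everything except \<open>{v}\<close>, so both have weight 1. Hence
\<open>w(S(x)) = w(B(x)) - w(U(x)) = 1 - w(U(x))\<close>, and the sum becomes
\<open>\<Sum>x. w(x) - \<Sum>x\<subseteq>y. w(x) w(y)\<close>. Summing the double sum over \<open>x\<close> first turns it into
\<open>\<Sum>y. w(y) w(closure of y) = \<Sum>y. w(y)\<close>, so the two terms cancel.\<close>

lemma simplicial_complexD:
  assumes "simplicial_complex G"
  shows simplicial_complex_finite: "finite G"
    and simplicial_complex_face_nonempty: "x \<in> G \<Longrightarrow> x \<noteq> {}"
    and simplicial_complex_face_finite: "x \<in> G \<Longrightarrow> finite x"
    and simplicial_complex_subset_closed: "x \<in> G \<Longrightarrow> y \<subseteq> x \<Longrightarrow> y \<noteq> {} \<Longrightarrow> y \<in> G"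
  using assms unfolding simplicial_complex_def by blast+

lemma w_insert:
  assumes "finite y" "y \<noteq> {}" "v \<notin> y"
  shows "w (insert v y) = - w y"
proof -
  obtain k where "card y = Suc k"
    using assms(1,2) by (metis card_0_eq not0_implies_Suc)
  then show ?thesis
    using assms by (simp add: w_def)
qed

lemma wset_cone:
  assumes fin: "finite A" and nonempty: "{} \<notin> A" and finite_faces: "\<And>y. y \<in> A \<Longrightarrow> finite y"
    and apex: "{v} \<in> A"
    and insert_apex: "\<And>y. y \<in> A \<Longrightarrow> insert v y \<in> A"
    and remove_apex: "\<And>y. y \<in> A \<Longrightarrow> y \<noteq> {v} \<Longrightarrow> y - {v} \<in> A"
  shows "wset A = 1"
proof -
  define base where "base = {y\<in>A. v \<notin> y}"
  define with_apex where "with_apex = {y\<in>A. v \<in> y}"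
  have finite_parts: "finite base" "finite with_apex"
    using fin unfolding base_def with_apex_def by auto
  have with_apex_image: "with_apex = insert v ` insert {} base"
  proof (intro equalityI subsetI)
    fix y assume y: "y \<in> with_apex"
    show "y \<in> insert v ` insert {} base"
    proof (cases "y = {v}")
      case False
      then have "y - {v} \<in> base"
        using y remove_apex unfolding base_def with_apex_def by auto
      moreover have "y = insert v (y - {v})"
        using y unfolding with_apex_def by auto
      ultimately show ?thesis by blast
    qed auto
  qed (use apex insert_apex in \<open>auto simp: base_def with_apex_def\<close>)
  have "inj_on (insert v) (insert {} base)"
    by (rule inj_onI) (auto simp: base_def dest: insert_ident)
  moreover have "{} \<notin> base"
    using nonempty unfolding base_def by auto
  ultimately have "wset with_apex = w {v} + (\<Sum>y\<in>base. w (insert v y))"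
    unfolding wset_def with_apex_image using finite_parts by (simp add: sum.reindex)
  also have "(\<Sum>y\<in>base. w (insert v y)) = - wset base"
    unfolding wset_def sum_negf[symmetric]
    by (rule sum.cong) (use finite_faces nonempty in \<open>auto simp: base_def intro!: w_insert\<close>)
  finally have "wset with_apex = 1 - wset base"
    by (simp add: w_def)
  moreover have "A = base \<union> with_apex" "base \<inter> with_apex = {}"
    unfolding base_def with_apex_def by auto
  then have "wset A = wset base + wset with_apex"
    unfolding wset_def using finite_parts by (simp add: sum.union_disjoint)
  ultimately show ?thesis by simp
qed

lemma wset_faces_of_common_vertex:
  assumes G: "simplicial_complex G" and "F \<subseteq> G" "F \<noteq> {}"
    and common_vertex: "\<And>z. z \<in> F \<Longrightarrow> v \<in> z"
  shows "wset {y\<in>G. \<exists>z\<in>F. y \<subseteq> z} = 1"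
proof (rule wset_cone[where v = v])
  let ?A = "{y\<in>G. \<exists>z\<in>F. y \<subseteq> z}"
  note closed = simplicial_complex_subset_closed[OF G]
  show "finite ?A"
    using simplicial_complex_finite[OF G] by simp
  show "{} \<notin> ?A" "\<And>y. y \<in> ?A \<Longrightarrow> finite y"
    using simplicial_complex_face_nonempty[OF G] simplicial_complex_face_finite[OF G] by auto
  show "{v} \<in> ?A"
  proof -
    obtain z where "z \<in> F"
      using \<open>F \<noteq> {}\<close> by blast
    then show ?thesis
      using \<open>F \<subseteq> G\<close> common_vertex closed[of z "{v}"] by blast
  qed
  show "insert v y \<in> ?A" if y: "y \<in> ?A" for y
  proof -
    obtain z where z: "z \<in> F" "y \<subseteq> z"
      using y by blast
    then have "insert v y \<subseteq> z" "z \<in> G"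
      using common_vertex \<open>F \<subseteq> G\<close> by auto
    then show ?thesis
      using z closed[of z "insert v y"] by blast
  qed
  show "y - {v} \<in> ?A" if y: "y \<in> ?A" "y \<noteq> {v}" for y
  proof -
    obtain z where z: "z \<in> F" "y \<subseteq> z"
      using y by blast
    have "y \<noteq> {}"
      using y simplicial_complex_face_nonempty[OF G] by blast
    then have "y - {v} \<noteq> {}"
      using y(2) by blast
    moreover have "y - {v} \<subseteq> z" "z \<in> G"
      using z \<open>F \<subseteq> G\<close> by auto
    ultimately show ?thesis
      using z closed[of z "y - {v}"] by blast
  qed
qed

lemma wset_ball:
  assumes G: "simplicial_complex G" and x: "x \<in> G"
  shows "wset (ball G x) = 1"
proof -
  obtain v where "v \<in> x"
    using simplicial_complex_face_nonempty[OF G x] by blast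
  moreover have "ball G x = {y\<in>G. \<exists>z\<in>star G x. y \<subseteq> z}"
    unfolding ball_def star_def by blast
  ultimately show ?thesis
    using wset_faces_of_common_vertex[OF G, of "star G x" v] x by (auto simp: star_def)
qed

lemma wset_closure_simplex:
  assumes G: "simplicial_complex G" and y: "y \<in> G"
  shows "wset {x\<in>G. x \<subseteq> y} = 1"
proof -
  obtain v where "v \<in> y"
    using simplicial_complex_face_nonempty[OF G y] by blast
  then show ?thesis
    using wset_faces_of_common_vertex[OF G, of "{y}" v] y by simp
qed

lemma wset_sphere:
  assumes G: "simplicial_complex G" and x: "x \<in> G"
  shows "wset (sphere G x) = 1 - wset (star G x)"
proof -
  have "star G x \<subseteq> ball G x"
    unfolding star_def ball_def by blast
  moreover have "finite (ball G x)"
    using simplicial_complex_finite[OF G] unfolding ball_def by simp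
  ultimately show ?thesis
    unfolding sphere_def wset_def using wset_ball[OF G x, unfolded wset_def]
    by (simp add: sum_diff)
qed

lemma sum_w_star_eq_sum_w_closure:
  assumes "finite G"
  shows "(\<Sum>x\<in>G. w x * wset (star G x)) = (\<Sum>y\<in>G. w y * wset {x\<in>G. x \<subseteq> y})"
proof -
  have "(\<Sum>x\<in>G. w x * wset (star G x)) = (\<Sum>x\<in>G. \<Sum>y\<in>G. if x \<subseteq> y then w x * w y else 0)"
    unfolding wset_def star_def sum_distrib_left
    by (rule sum.cong) (auto simp: sum.inter_filter[OF assms, symmetric])
  also have "\<dots> = (\<Sum>y\<in>G. \<Sum>x\<in>G. if x \<subseteq> y then w x * w y else 0)"
    by (rule sum.swap)
  also have "\<dots> = (\<Sum>y\<in>G. w y * wset {x\<in>G. x \<subseteq> y})"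
    unfolding wset_def sum_distrib_left
    by (rule sum.cong) (auto simp: sum.inter_filter[OF assms, symmetric] mult.commute)
  finally show ?thesis .
qed

theorem mainTheorem4:
  fixes G :: "'a set set"
  assumes "simplicial_complex G"
  shows "(\<Sum>x\<in>G. w x * wset (sphere G x)) = 0"
proof -
  have "(\<Sum>x\<in>G. w x * wset (sphere G x)) = (\<Sum>x\<in>G. w x - w x * wset (star G x))"
    by (rule sum.cong) (auto simp: wset_sphere[OF assms] algebra_simps)
  also have "\<dots> = (\<Sum>x\<in>G. w x) - (\<Sum>y\<in>G. w y * wset {x\<in>G. x \<subseteq> y})"
    by (simp add: sum_subtractf sum_w_star_eq_sum_w_closure[OF simplicial_complex_finite[OF assms]])
  also have "\<dots> = 0"
    by (simp add: wset_closure_simplex[OF assms])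
  finally show ?thesis .
qed

end
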